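(* Let $f(z)=z+\sum_{k=2}^{\infty}a_kz^k$ be analytic in $\mathbb{D}=\{z:|z|<1\}$ with $zf'(z)-f(z)=\frac12 z^2\phi(z)$ for all $z\in\mathbb{D}$, where $\phi$ is analytic in $\mathbb{D}$ and $|\phi(z)|\le1$. Let $r_{\mathcal S^*}$ denote the positive root (in $(0,1)$) of \[3(1-r)(2-r)\ln(1-r)+4-4r-3r^2+2r^3=0.\] Then for every $n\ge2$ the partial sum $s_n(z;f)=z+\sum_{k=2}^n a_kz^k$ is starlike in the disk $|z|<r_{\mathcal S^*}$.
   Context: A normalized analytic function $g$ is starlike in a disk $|z|<\rho$ if it maps it conformally onto a domain starlike with respect to $0$; equivalently $\mathrm{Re}(zg'(z)/g(z))>0$ for $0<|z|<\rho$. *)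

theory Defs
  imports "HOL-Complex_Analysis.Complex_Analysis"
begin

definition rS_eq :: "real \<Rightarrow> real" where
  "rS_eq r = 3 * (1 - r) * (2 - r) * ln (1 - r) + 4 - 4*r - 3*r^2 + 2*r^3"

text \<open>The root of rS_eq in (0,1) (it is unique).\<close>
definition r_starlike :: real where
  "r_starlike = (THE r. 0 < r \<and> r < 1 \<and> rS_eq r = 0)"

definition starlike_in_disk :: "(complex \<Rightarrow> complex) \<Rightarrow> real \<Rightarrow> bool" where
  "starlike_in_disk g \<rho> \<longleftrightarrow>
     (\<forall>z. 0 < norm z \<and> norm z < \<rho> \<longrightarrow> g z \<noteq> 0 \<and> Re (z * deriv g z / g z) > 0)"

end

theory Submission
  imports Defs "HOL-Analysis.Harmonic_Numbers"
begin

text \<open>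
  Comparing Taylor coefficients in \<open>z f' - f = z\<^sup>2 \<phi> / 2\<close> gives \<open>(k - 1) a k = \<phi>\<^sub>k\<^sub>-\<^sub>2 / 2\<close>,
  and Cauchy's estimate \<open>|\<phi>\<^sub>j| \<le> 1\<close> yields \<open>k |a k| \<le> 1\<close> for \<open>k \<ge> 2\<close>. For \<open>|z| = r < 1/2\<close>
  the partial sum \<open>s\<close> then satisfies
  \<open>|z s'(z) - s(z)| \<le> \<Sum> (k - 1) |a k| r^k < r - \<Sum> |a k| r^k \<le> |s(z)|\<close>,
  because \<open>\<Sum> k |a k| r^(k-1) \<le> \<Sum> r^(k-1) < 1\<close>; so \<open>z s'/s\<close> lies in the disc of radius 1
  about 1. Thus \<open>s\<close> is starlike even in \<open>|z| < 1/2\<close>, which contains the disc of the theorem: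
  the root equation factors as \<open>(1 - r)(2 - r) u(r)\<close> with \<open>u\<close> decreasing and
  \<open>u(1/2) = 2 - 3 ln 2 \<le> 0\<close>.
\<close>

definition rS_core :: "real \<Rightarrow> real" where
  "rS_core r = 3 * ln (1 - r) + 2 * r + 3 - 1 / (1 - r)"

lemma rS_eq_factor: "r < 1 \<Longrightarrow> rS_eq r = (1 - r) * (2 - r) * rS_core r"
  unfolding rS_eq_def rS_core_def by (simp add: field_simps power2_eq_square power3_eq_cube)

lemma rS_core_strict_antimono:
  assumes "0 \<le> a" "a < b" "b < 1"
  shows "rS_core b < rS_core a"
proof (rule DERIV_neg_imp_decreasing[OF \<open>a < b\<close>])
  fix x assume "a \<le> x" "x \<le> b"
  with assms have x: "0 \<le> x" "x < 1" by auto
  have "(rS_core has_real_derivative (- 3 / (1 - x) + 2 - 1 / (1 - x)^2)) (at x)"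
    unfolding rS_core_def using x
    by (auto intro!: derivative_eq_intros simp: field_simps power2_eq_square)
  moreover have "- 3 / (1 - x) + 2 - 1 / (1 - x)^2 < 0"
  proof -
    have "1 \<le> 1 / (1 - x)" "0 < 1 / (1 - x)^2" using x by (auto simp: field_simps)
    then show ?thesis by linarith
  qed
  ultimately show "\<exists>y. (rS_core has_real_derivative y) (at x) \<and> y < 0" by blast
qed

lemma rS_core_half_nonpos: "rS_core (1/2) \<le> 0"
  using ln2_ge_two_thirds by (simp add: rS_core_def ln_div)

lemma rS_eq_root_exists: "\<exists>r. 0 < r \<and> r < 1 \<and> rS_eq r = 0"
proof -
  have "isCont rS_core x" if "x < 1" for x
    unfolding rS_core_def using that by (intro continuous_intros) auto
  moreover have "0 \<le> rS_core 0" by (simp add: rS_core_def)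
  ultimately obtain r where r: "0 \<le> r" "r \<le> 1/2" "rS_core r = 0"
    using IVT2[of rS_core "1/2" 0 0] rS_core_half_nonpos by fastforce
  moreover have "r \<noteq> 0" using r by (auto simp: rS_core_def)
  ultimately show ?thesis by (intro exI[of _ r]) (simp add: rS_eq_factor)
qed

lemma rS_eq_root_unique:
  assumes "0 < r" "r < 1" "rS_eq r = 0" "0 < s" "s < 1" "rS_eq s = 0"
  shows "r = s"
proof -
  have "rS_core r = rS_core s" using assms by (simp add: rS_eq_factor)
  then show ?thesis
    using rS_core_strict_antimono[of r s] rS_core_strict_antimono[of s r] assms
    by (cases r s rule: linorder_cases) auto
qed

lemma r_starlike_le_half: "r_starlike \<le> 1/2"
proof -
  have "\<exists>!r. 0 < r \<and> r < 1 \<and> rS_eq r = 0"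
    using rS_eq_root_exists rS_eq_root_unique by blast
  then have r: "0 < r_starlike" "r_starlike < 1" "rS_eq r_starlike = 0"
    unfolding r_starlike_def by (metis (mono_tags, lifting) theI')+
  show ?thesis
  proof (rule ccontr)
    assume "\<not> r_starlike \<le> 1/2"
    then have "rS_core r_starlike < rS_core (1/2)"
      using r by (intro rS_core_strict_antimono) auto
    then show False using r rS_core_half_nonpos by (simp add: rS_eq_factor)
  qed
qed

lemma Cauchy_inequality_ball:
  fixes f :: "complex \<Rightarrow> complex"
  assumes holf: "f holomorphic_on ball \<xi> R" and "0 < R"
    and bound: "\<And>w. w \<in> ball \<xi> R \<Longrightarrow> norm (f w) \<le> B"
  shows "norm ((deriv ^^ n) f \<xi>) \<le> fact n * B / R ^ n"
proof (rule tendsto_le[of "at_left R"])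
  show "((\<lambda>\<rho>. fact n * B / \<rho> ^ n) \<longlongrightarrow> fact n * B / R ^ n) (at_left R)"
    using \<open>0 < R\<close> by (intro tendsto_intros) auto
  show "\<forall>\<^sub>F \<rho> in at_left R. norm ((deriv ^^ n) f \<xi>) \<le> fact n * B / \<rho> ^ n"
    using eventually_at_left_real[OF \<open>0 < R\<close>]
  proof eventually_elim
    case (elim \<rho>)
    then have "cball \<xi> \<rho> \<subseteq> ball \<xi> R" by auto
    then show ?case using elim
      by (intro Cauchy_inequality holomorphic_on_subset[OF holf]
          holomorphic_on_imp_continuous_on bound) (auto simp: dist_norm)
  qed
qed auto

lemma norm_fps_expansion_nth_le:
  fixes f :: "complex \<Rightarrow> complex"
  assumes "f holomorphic_on ball 0 R" "0 < R" "\<And>w. w \<in> ball 0 R \<Longrightarrow> norm (f w) \<le> B"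
  shows "norm (fps_expansion f 0 $ n) \<le> B / R ^ n"
  using Cauchy_inequality_ball[OF assms, of n]
  by (simp add: fps_expansion_def norm_divide field_simps)

lemma coeff_of_z_deriv_minus_self:
  fixes f g :: "complex \<Rightarrow> complex" and a :: "nat \<Rightarrow> complex"
  assumes "0 < R" and f_ser: "\<And>z. z \<in> ball 0 R \<Longrightarrow> (\<lambda>k. a k * z ^ k) sums f z"
    and "g has_fps_expansion G"
    and eq: "\<And>z. z \<in> ball 0 R \<Longrightarrow> z * deriv f z - f z = g z"
  shows "(of_nat k - 1) * a k = G $ k"
proof -
  have near0: "\<forall>\<^sub>F z in nhds 0. z \<in> ball 0 R"
    using \<open>0 < R\<close> by (intro eventually_nhds_in_open) auto
  have "f has_fps_expansion Abs_fps a"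
    by (rule has_fps_expansionI) (use near0 f_ser in \<open>auto elim: eventually_mono\<close>)
  then have "(\<lambda>z. z * deriv f z - f z) has_fps_expansion fps_X * fps_deriv (Abs_fps a) - Abs_fps a"
    by (intro fps_expansion_intros)
  moreover have "(\<lambda>z. z * deriv f z - f z) has_fps_expansion G"
    using \<open>g has_fps_expansion G\<close>
    by (subst has_fps_expansion_cong[OF _ refl]) (use near0 eq in \<open>auto elim: eventually_mono\<close>)
  ultimately have "fps_X * fps_deriv (Abs_fps a) - Abs_fps a = G"
    by (rule fps_expansion_unique_complex)
  then have "(fps_X * fps_deriv (Abs_fps a) - Abs_fps a) $ k = G $ k"
    by simp
  then show ?thesis
    by (cases k) (simp_all add: fps_X_mult_nth algebra_simps)
qed

lemma norm_of_nat_minus_one: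
  assumes "1 \<le> k"
  shows "norm (of_nat k - 1 :: 'a :: real_normed_algebra_1) = real k - 1"
proof -
  have shift: "(of_nat k - 1 :: 'a) = of_nat (k - 1)"
    using assms by (simp add: of_nat_diff)
  show ?thesis
    unfolding shift norm_of_nat using assms by (simp add: of_nat_diff)
qed

lemma coeff_bound_of_z_deriv_minus_self:
  fixes f \<phi> :: "complex \<Rightarrow> complex" and a :: "nat \<Rightarrow> complex"
  assumes f_ser: "\<And>z. z \<in> ball 0 1 \<Longrightarrow> (\<lambda>k. a k * z ^ k) sums f z"
    and phi_holo: "\<phi> holomorphic_on ball 0 1"
    and phi_bd: "\<And>z. z \<in> ball 0 1 \<Longrightarrow> norm (\<phi> z) \<le> 1"
    and eq: "\<And>z. z \<in> ball 0 1 \<Longrightarrow> z * deriv f z - f z = 1/2 * z^2 * \<phi> z"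
    and "k \<ge> 2"
  shows "norm (a k) * (real k - 1) \<le> 1/2"
proof -
  define \<Phi> where "\<Phi> = fps_expansion \<phi> 0"
  have "\<phi> has_fps_expansion \<Phi>"
    unfolding \<Phi>_def by (rule has_fps_expansion_fps_expansion[OF _ _ phi_holo]) auto
  then have "(\<lambda>z. 1/2 * z^2 * \<phi> z) has_fps_expansion fps_const (1/2) * fps_X^2 * \<Phi>"
    by (intro fps_expansion_intros)
  from coeff_of_z_deriv_minus_self[OF zero_less_one f_ser this eq]
  have coeff: "(of_nat k - 1) * a k = 1/2 * \<Phi> $ (k - 2)"
    using \<open>k \<ge> 2\<close> by (simp add: mult.assoc fps_X_power_mult_nth)
  have "norm (a k) * (real k - 1) = norm ((of_nat k - 1) * a k)"
    using \<open>k \<ge> 2\<close> by (simp add: norm_mult norm_of_nat_minus_one)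
  also have "\<dots> = norm (\<Phi> $ (k - 2)) / 2"
    unfolding coeff by (simp add: norm_mult)
  also have "\<dots> \<le> 1/2"
    using norm_fps_expansion_nth_le[OF phi_holo _ phi_bd] unfolding \<Phi>_def by simp
  finally show ?thesis .
qed

lemma Re_div_pos_if_norm_diff_less:
  fixes p q :: complex
  assumes "norm (p - q) < norm q"
  shows "0 < Re (p / q)"
proof -
  have "q \<noteq> 0" using assms by auto
  then have "p / q = 1 + (p - q) / q" by (simp add: field_simps)
  moreover have "norm ((p - q) / q) < 1"
    using assms \<open>q \<noteq> 0\<close> by (simp add: norm_divide divide_simps)
  ultimately show ?thesis
    using abs_Re_le_cmod[of "(p - q) / q"] by auto
qed

lemma polynomial_starlike_at:
  fixes a :: "nat \<Rightarrow> complex"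
  assumes "z \<noteq> 0" and small: "(\<Sum>k=2..n. real k * norm (a k) * norm z ^ (k - 1)) < 1"
  defines "s \<equiv> \<lambda>w. w + (\<Sum>k=2..n. a k * w ^ k)"
  shows "s z \<noteq> 0 \<and> 0 < Re (z * deriv s z / s z)"
proof -
  define r where "r = norm z"
  have "(s has_field_derivative 1 + (\<Sum>k=2..n. of_nat k * a k * z ^ (k - 1))) (at z)"
    unfolding s_def by (auto intro!: derivative_eq_intros sum.cong simp: mult_ac)
  then have deriv: "deriv s z = 1 + (\<Sum>k=2..n. of_nat k * a k * z ^ (k - 1))"
    by (rule DERIV_imp_deriv)
  have "z * deriv s z - s z = (\<Sum>k=2..n. z * (of_nat k * a k * z ^ (k - 1))) - (\<Sum>k=2..n. a k * z ^ k)"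
    unfolding deriv by (simp add: s_def distrib_left sum_distrib_left)
  also have "\<dots> = (\<Sum>k=2..n. of_nat k * a k * (z * z ^ (k - 1)) - a k * z ^ k)"
    by (simp add: sum_subtractf mult_ac)
  also have "\<dots> = (\<Sum>k=2..n. (of_nat k - 1) * a k * z ^ k)"
  proof (rule sum.cong)
    fix k assume "k \<in> {2..n}"
    then have "z * z ^ (k - 1) = z ^ k" by (cases k) auto
    then show "of_nat k * a k * (z * z ^ (k - 1)) - a k * z ^ k = (of_nat k - 1) * a k * z ^ k"
      by (simp add: algebra_simps)
  qed simp
  also have "norm \<dots> \<le> (\<Sum>k=2..n. (real k - 1) * norm (a k) * r ^ k)"
    by (rule order_trans[OF norm_sum])
      (auto intro!: sum_mono simp: norm_mult norm_power r_def norm_of_nat_minus_one)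
  finally have diff_le: "norm (z * deriv s z - s z) \<le> (\<Sum>k=2..n. (real k - 1) * norm (a k) * r ^ k)" .
  have "r - (\<Sum>k=2..n. norm (a k) * r ^ k) \<le> norm (s z)"
  proof -
    have "norm (\<Sum>k=2..n. a k * z ^ k) \<le> (\<Sum>k=2..n. norm (a k) * r ^ k)"
      by (rule order_trans[OF norm_sum]) (simp add: norm_mult norm_power r_def)
    then show ?thesis
      using norm_triangle_ineq2[of z "- (\<Sum>k=2..n. a k * z ^ k)"] by (simp add: s_def r_def)
  qed
  moreover have "(\<Sum>k=2..n. (real k - 1) * norm (a k) * r ^ k) + (\<Sum>k=2..n. norm (a k) * r ^ k)
      = r * (\<Sum>k=2..n. real k * norm (a k) * r ^ (k - 1))"
    by (simp add: sum.distrib[symmetric] sum_distrib_left algebra_simps power_eq_if)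
  moreover have "r * (\<Sum>k=2..n. real k * norm (a k) * r ^ (k - 1)) < r"
    using small \<open>z \<noteq> 0\<close> by (simp add: r_def)
  ultimately have "norm (z * deriv s z - s z) < norm (s z)"
    using diff_le by linarith
  then show ?thesis
    using Re_div_pos_if_norm_diff_less by fastforce
qed

lemma sum_power_less_one:
  fixes r :: real
  assumes "0 \<le> r" "r < 1/2"
  shows "(\<Sum>k=2..n. r ^ (k - 1)) < 1"
proof (cases "n \<ge> 2")
  case True
  have "(\<Sum>k=2..n. r ^ (k - 1)) = (\<Sum>i=1..n-1. r ^ i)"
    using sum.shift_bounds_cl_nat_ivl[of "\<lambda>k. r ^ (k - 1)" 1 1 "n - 1"] True by (simp add: eval_nat_numeral)
  moreover have "(1 - r) * (\<Sum>i=1..n-1. r ^ i) = r - r ^ n"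
    using sum_gp_multiplied[of 1 "n - 1" r] True by simp
  moreover have "r - r ^ n < 1 - r"
    using assms zero_le_power[of r n] by linarith
  ultimately have "(1 - r) * (\<Sum>k=2..n. r ^ (k - 1)) < (1 - r) * 1"
    by simp
  then show ?thesis
    using assms by (simp only: mult_less_cancel_left_pos diff_gt_0_iff_gt)
qed simp

lemma partial_sum_starlike_in_half_disk:
  fixes a :: "nat \<Rightarrow> complex"
  assumes coeff: "\<And>k. k \<ge> 2 \<Longrightarrow> norm (a k) * (real k - 1) \<le> 1/2"
  shows "starlike_in_disk (\<lambda>z. z + (\<Sum>k=2..n. a k * z ^ k)) (1/2)"
  unfolding starlike_in_disk_def
proof (intro allI impI)
  fix z :: complex
  assume z: "0 < norm z \<and> norm z < 1/2"
  have "real k * norm (a k) \<le> 1" if "k \<ge> 2" for k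
  proof -
    have "real k * norm (a k) \<le> 2 * (real k - 1) * norm (a k)"
      using that by (intro mult_right_mono) auto
    also have "\<dots> = 2 * (norm (a k) * (real k - 1))" by (simp add: mult_ac)
    also have "\<dots> \<le> 1" using coeff[OF that] by simp
    finally show ?thesis .
  qed
  then have "(\<Sum>k=2..n. real k * norm (a k) * norm z ^ (k - 1)) \<le> (\<Sum>k=2..n. norm z ^ (k - 1))"
    by (intro sum_mono) (simp add: mult_left_le_one_le)
  also have "\<dots> < 1"
    using z by (intro sum_power_less_one) auto
  finally show "z + (\<Sum>k=2..n. a k * z ^ k) \<noteq> 0 \<and>
      0 < Re (z * deriv (\<lambda>z. z + (\<Sum>k=2..n. a k * z ^ k)) z / (z + (\<Sum>k=2..n. a k * z ^ k)))"
    using z by (intro polynomial_starlike_at) auto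
qed

lemma starlike_in_disk_mono:
  "starlike_in_disk g \<rho>' \<Longrightarrow> \<rho> \<le> \<rho>' \<Longrightarrow> starlike_in_disk g \<rho>"
  unfolding starlike_in_disk_def by force

theorem theorem2p2:
  fixes f \<phi> :: "complex \<Rightarrow> complex" and a :: "nat \<Rightarrow> complex" and n :: nat
  assumes f_holo: "f holomorphic_on ball 0 1"
    and f_ser: "\<And>z. z \<in> ball 0 1 \<Longrightarrow> (\<lambda>k. a k * z ^ k) sums f z"
    and a0: "a 0 = 0" and a1: "a 1 = 1"
    and phi_holo: "\<phi> holomorphic_on ball 0 1"
    and phi_bd: "\<And>z. z \<in> ball 0 1 \<Longrightarrow> norm (\<phi> z) \<le> 1"
    and eq: "\<And>z. z \<in> ball 0 1 \<Longrightarrow> z * deriv f z - f z = 1/2 * z^2 * \<phi> z"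
    and n: "n \<ge> 2"
  shows "starlike_in_disk (\<lambda>z. z + (\<Sum>k=2..n. a k * z ^ k)) r_starlike"
proof -
  have "\<And>k. k \<ge> 2 \<Longrightarrow> norm (a k) * (real k - 1) \<le> 1/2"
    by (rule coeff_bound_of_z_deriv_minus_self[OF f_ser phi_holo phi_bd eq])
  then have "starlike_in_disk (\<lambda>z. z + (\<Sum>k=2..n. a k * z ^ k)) (1/2)"
    by (rule partial_sum_starlike_in_half_disk)
  then show ?thesis
    using r_starlike_le_half by (rule starlike_in_disk_mono)
qed

end
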